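(* Let $G$ be a graph having a perfect 2-matching. Then there is a graph $G'$ on the same vertex set with $d_{G'}(v)=d_G(v)$ for every vertex $v$, such that $G'$ has a perfect 2-matching with at most one odd cycle.
   Context: All graphs are finite and simple. A perfect 2-matching of a graph is a spanning subgraph each of whose connected components is either a $K_2$ (a single edge) or an odd cycle. *)

theory Defs
  imports Main
begin

definition simple_graph :: "'a set \<Rightarrow> 'a set set \<Rightarrow> bool" where
  "simple_graph V E \<longleftrightarrow> finite V \<and>
     (\<forall>e\<in>E. \<exists>u v. u \<noteq> v \<and> e = {u, v} \<and> u \<in> V \<and> v \<in> V)"

definition degree :: "'a set set \<Rightarrow> 'a \<Rightarrow> nat" where
  "degree E v = card {e \<in> E. v \<in> e}"

definition component :: "'a set \<Rightarrow> 'a set set \<Rightarrow> 'a \<Rightarrow> 'a set" where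
  "component V M v = {u \<in> V. (v, u) \<in> {(x, y). {x, y} \<in> M}\<^sup>*}"

definition components :: "'a set \<Rightarrow> 'a set set \<Rightarrow> 'a set set" where
  "components V M = component V M ` V"

definition edges_in :: "'a set set \<Rightarrow> 'a set \<Rightarrow> 'a set set" where
  "edges_in M C = {e \<in> M. e \<subseteq> C}"

definition is_K2 :: "'a set set \<Rightarrow> 'a set \<Rightarrow> bool" where
  "is_K2 M C \<longleftrightarrow> (\<exists>u w. u \<noteq> w \<and> C = {u, w} \<and> edges_in M C = {{u, w}})"

definition is_odd_cycle :: "'a set set \<Rightarrow> 'a set \<Rightarrow> bool" where
  "is_odd_cycle M C \<longleftrightarrow> (\<exists>vs. distinct vs \<and> length vs \<ge> 3 \<and> odd (length vs) \<and>
      set vs = C \<and>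
      edges_in M C = {{vs ! i, vs ! ((i + 1) mod length vs)} | i. i < length vs})"

definition perfect_2_matching :: "'a set \<Rightarrow> 'a set set \<Rightarrow> 'a set set \<Rightarrow> bool" where
  "perfect_2_matching V E M \<longleftrightarrow> M \<subseteq> E \<and>
     (\<forall>C \<in> components V M. is_K2 M C \<or> is_odd_cycle M C)"

end

(* Induction on the number of odd cycles. Let C1, C2 be two odd cycles of a perfect
   2-matching and pick cycle edges aa' in C1 and bb' in C2. Deleting any vertex from an odd
   cycle leaves a path on an even number of vertices, which has a perfect matching by cycle
   edges. So if ab is an edge of G, then C1 and C2 can be replaced by the edge ab together with
   perfect matchings of C1 - a and C2 - b; likewise if a'b' is an edge. Otherwise replacing
   the edges aa', bb' of G by ab, a'b' preserves all degrees, and the first case applies to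
   the new graph. *)

theory Submission
  imports Defs
begin

section \<open>Simple graphs and their components\<close>

lemma simple_graph_edgeD:
  "simple_graph V E \<Longrightarrow> {x, y} \<in> E \<Longrightarrow> x \<noteq> y \<and> x \<in> V \<and> y \<in> V"
  unfolding simple_graph_def by (fastforce simp: doubleton_eq_iff)

lemma simple_graph_subset: "simple_graph V E \<Longrightarrow> E' \<subseteq> E \<Longrightarrow> simple_graph V E'"
  unfolding simple_graph_def by blast

lemma simple_graph_insert:
  "simple_graph V E \<Longrightarrow> u \<noteq> w \<Longrightarrow> u \<in> V \<Longrightarrow> w \<in> V \<Longrightarrow> simple_graph V (insert {u, w} E)"
  unfolding simple_graph_def by blast

lemma finite_edges: "simple_graph V E \<Longrightarrow> finite E"
proof -
  assume "simple_graph V E"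
  then have "E \<subseteq> Pow V" "finite V" unfolding simple_graph_def by auto
  then show "finite E" by (simp add: finite_subset)
qed

lemma perfect_2_matching_simple_graph:
  "simple_graph V E \<Longrightarrow> perfect_2_matching V E M \<Longrightarrow> simple_graph V M"
  unfolding perfect_2_matching_def using simple_graph_subset by blast

definition adj :: "'a set set \<Rightarrow> ('a \<times> 'a) set" where
  "adj M = {(x, y). {x, y} \<in> M}"

lemma in_component_iff: "u \<in> component V M v \<longleftrightarrow> u \<in> V \<and> (v, u) \<in> (adj M)\<^sup>*"
  unfolding component_def adj_def by simp

lemma sym_adj: "sym (adj M)"
  unfolding adj_def sym_def by (simp add: insert_commute)

lemma adj_rtrancl_sym: "(x, y) \<in> (adj M)\<^sup>* \<Longrightarrow> (y, x) \<in> (adj M)\<^sup>*"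
  using sym_rtrancl[OF sym_adj] by (rule symD)

lemma adj_mono: "M \<subseteq> M' \<Longrightarrow> adj M \<subseteq> adj M'"
  unfolding adj_def by auto

lemma component_eq:
  assumes "u \<in> component V M v"
  shows "component V M u = component V M v"
proof -
  have "(v, u) \<in> (adj M)\<^sup>*" using assms by (simp add: in_component_iff)
  moreover from this have "(u, v) \<in> (adj M)\<^sup>*" by (rule adj_rtrancl_sym)
  ultimately show ?thesis by (auto simp: in_component_iff intro: rtrancl_trans)
qed

lemma components_subset: "C \<in> components V M \<Longrightarrow> C \<subseteq> V"
  unfolding components_def component_def by auto

lemma components_nonempty: "C \<in> components V M \<Longrightarrow> C \<noteq> {}"
  unfolding components_def by (auto simp: in_component_iff)

lemma Union_components: "\<Union>(components V M) = V"
  unfolding components_def by (auto simp: in_component_iff)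

lemma components_disjoint:
  "C \<in> components V M \<Longrightarrow> D \<in> components V M \<Longrightarrow> C \<noteq> D \<Longrightarrow> C \<inter> D = {}"
proof (rule ccontr)
  assume "C \<in> components V M" "D \<in> components V M" "C \<noteq> D" "C \<inter> D \<noteq> {}"
  then obtain x v w where "x \<in> C" "x \<in> D" "C = component V M v" "D = component V M w"
    unfolding components_def by blast
  then show False using component_eq \<open>C \<noteq> D\<close> by metis
qed

lemma finite_components: "finite V \<Longrightarrow> finite (components V M)"
  unfolding components_def by simp

lemma edge_in_component:
  assumes "simple_graph V M" "e \<in> M"
  obtains C where "C \<in> components V M" "e \<subseteq> C"
proof -
  obtain x y where e: "e = {x, y}" "x \<in> V" "y \<in> V"
    using assms unfolding simple_graph_def by blast
  then have "(x, y) \<in> adj M" using assms(2) by (simp add: adj_def)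
  then have "e \<subseteq> component V M x" using e by (auto simp: in_component_iff)
  moreover have "component V M x \<in> components V M" using e(2) by (simp add: components_def)
  ultimately show thesis using that by blast
qed

lemma component_connected:
  assumes M: "simple_graph V M" and C: "C \<in> components V M" and "x \<in> C" "y \<in> C"
  shows "(x, y) \<in> (adj (edges_in M C))\<^sup>*"
proof -
  obtain v where v: "C = component V M v" using C by (auto simp: components_def)
  have path: "(v, u) \<in> (adj (edges_in M C))\<^sup>*" if "(v, u) \<in> (adj M)\<^sup>*" for u
    using that
  proof (induction rule: rtrancl_induct)
    case (step y z)
    then have "{y, z} \<in> M" by (simp add: adj_def)
    moreover have "y \<in> C" "z \<in> C"
      using step simple_graph_edgeD[OF M \<open>{y, z} \<in> M\<close>] v
      by (auto simp: in_component_iff intro: rtrancl_into_rtrancl)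
    ultimately have "(y, z) \<in> adj (edges_in M C)" by (simp add: adj_def edges_in_def)
    with step.IH show ?case by (rule rtrancl_into_rtrancl)
  qed simp
  have "(v, x) \<in> (adj (edges_in M C))\<^sup>*" "(v, y) \<in> (adj (edges_in M C))\<^sup>*"
    using assms(3,4) v path by (auto simp: in_component_iff)
  then show ?thesis by (metis adj_rtrancl_sym rtrancl_trans)
qed

lemma components_eqI:
  assumes cover: "\<Union>P = V" and disj: "pairwise disjnt P" and nonempty: "{} \<notin> P"
    and closed: "\<And>e. e \<in> M \<Longrightarrow> \<exists>B\<in>P. e \<subseteq> B"
    and connected: "\<And>B x y. B \<in> P \<Longrightarrow> x \<in> B \<Longrightarrow> y \<in> B \<Longrightarrow> (x, y) \<in> (adj M)\<^sup>*"
  shows "components V M = P"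
proof -
  have block: "component V M v = B" if B: "B \<in> P" "v \<in> B" for B v
  proof
    have "u \<in> B" if "(v, u) \<in> (adj M)\<^sup>*" for u
      using that
    proof (induction rule: rtrancl_induct)
      case (step y z)
      then obtain B' where "B' \<in> P" "{y, z} \<subseteq> B'" using closed[of "{y, z}"] step(2) by (auto simp: adj_def)
      with step.IH B disj show ?case by (metis disjnt_iff insert_subset pairwiseD)
    qed (use B in simp)
    then show "component V M v \<subseteq> B" by (auto simp: in_component_iff)
    show "B \<subseteq> component V M v" using B cover connected by (auto simp: in_component_iff)
  qed
  show ?thesis
  proof
    show "components V M \<subseteq> P"
      using block cover by (auto simp: components_def)
    show "P \<subseteq> components V M"
    proof
      fix B assume "B \<in> P"
      moreover obtain v where "v \<in> B" using \<open>B \<in> P\<close> nonempty by fastforce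
      ultimately show "B \<in> components V M"
        using block cover unfolding components_def by blast
    qed
  qed
qed

section \<open>Perfect matchings of odd cycles minus a vertex\<close>

definition perfect_matching_on :: "'a set \<Rightarrow> 'a set set \<Rightarrow> bool" where
  "perfect_matching_on S N \<longleftrightarrow>
     (\<forall>e\<in>N. \<exists>u w. u \<noteq> w \<and> e = {u, w}) \<and> pairwise disjnt N \<and> \<Union>N = S"

lemma perfect_matching_on_edge: "u \<noteq> w \<Longrightarrow> perfect_matching_on {u, w} {{u, w}}"
  unfolding perfect_matching_on_def by auto

lemma perfect_matching_on_Un:
  assumes N: "perfect_matching_on S N" and N': "perfect_matching_on T N'" and "S \<inter> T = {}"
  shows "perfect_matching_on (S \<union> T) (N \<union> N')"
proof -
  have cross: "disjnt e e'" if "e \<in> N" "e' \<in> N'" for e e'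
    using that N N' \<open>S \<inter> T = {}\<close> unfolding perfect_matching_on_def disjnt_def by blast
  have "pairwise disjnt (N \<union> N')"
  proof (rule pairwiseI)
    fix e e' assume "e \<in> N \<union> N'" "e' \<in> N \<union> N'" "e \<noteq> e'"
    with N N' cross show "disjnt e e'"
      unfolding perfect_matching_on_def by (metis UnE disjnt_sym pairwiseD(1))
  qed
  with N N' show ?thesis unfolding perfect_matching_on_def by auto
qed

lemma perfect_matching_onD:
  assumes "perfect_matching_on S N" "e \<in> N"
  shows "e \<subseteq> S" "e \<noteq> {}"
  using assms unfolding perfect_matching_on_def by auto

definition path_pairs :: "'a list \<Rightarrow> 'a set set" where
  "path_pairs vs = {{vs ! (2 * j + 1), vs ! (2 * j + 2)} | j. 2 * j + 2 < length vs}"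

lemma perfect_matching_on_path_pairs:
  assumes vs: "distinct vs" "odd (length vs)"
  shows "perfect_matching_on (set vs - {vs ! 0}) (path_pairs vs)"
proof -
  let ?n = "length vs"
  have nth_eq: "vs ! i = vs ! k \<longleftrightarrow> i = k" if "i < ?n" "k < ?n" for i k
    using nth_eq_iff_index_eq[OF vs(1) that] .
  have "\<exists>u w. u \<noteq> w \<and> e = {u, w}" if e: "e \<in> path_pairs vs" for e
  proof -
    obtain j where "e = {vs ! (2 * j + 1), vs ! (2 * j + 2)}" "2 * j + 2 < ?n"
      using e unfolding path_pairs_def by blast
    then show ?thesis using nth_eq[of "2 * j + 1" "2 * j + 2"] by auto
  qed
  moreover have "pairwise disjnt (path_pairs vs)"
  proof (rule pairwiseI)
    fix e e' assume "e \<in> path_pairs vs" "e' \<in> path_pairs vs" "e \<noteq> e'"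
    then obtain j k where "e = {vs ! (2 * j + 1), vs ! (2 * j + 2)}" "2 * j + 2 < ?n"
      and "e' = {vs ! (2 * k + 1), vs ! (2 * k + 2)}" "2 * k + 2 < ?n" "j \<noteq> k"
      unfolding path_pairs_def by blast
    then show "disjnt e e'" by (auto simp: disjnt_def nth_eq)
  qed
  moreover have "\<Union>(path_pairs vs) = set vs - {vs ! 0}"
  proof
    show "\<Union>(path_pairs vs) \<subseteq> set vs - {vs ! 0}"
    proof
      fix x assume "x \<in> \<Union>(path_pairs vs)"
      then obtain j where "x \<in> {vs ! (2 * j + 1), vs ! (2 * j + 2)}" "2 * j + 2 < ?n"
        unfolding path_pairs_def by blast
      then show "x \<in> set vs - {vs ! 0}"
        using nth_eq[of "2 * j + 1" 0] nth_eq[of "2 * j + 2" 0] by fastforce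
    qed
    show "set vs - {vs ! 0} \<subseteq> \<Union>(path_pairs vs)"
    proof
      fix x assume "x \<in> set vs - {vs ! 0}"
      then obtain i where i: "i < ?n" "i \<noteq> 0" "x = vs ! i" by (metis DiffE in_set_conv_nth insertI1)
      define j where "j = (i - 1) div 2"
      have "i = 2 * j + 1 \<or> i = 2 * j + 2" "2 * j + 2 < ?n"
        using i(1,2) vs(2) unfolding j_def by presburger+
      then show "x \<in> \<Union>(path_pairs vs)" using i(3) by (auto simp: path_pairs_def)
    qed
  qed
  ultimately show ?thesis unfolding perfect_matching_on_def by blast
qed

lemma path_pairs_rotate_subset:
  "path_pairs (rotate i vs) \<subseteq> {{vs ! k, vs ! ((k + 1) mod length vs)} | k. k < length vs}"
proof
  fix e assume "e \<in> path_pairs (rotate i vs)"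
  then obtain j where j: "e = {rotate i vs ! (2 * j + 1), rotate i vs ! (2 * j + 2)}"
    "2 * j + 2 < length vs" by (auto simp: path_pairs_def)
  have "0 < length vs" using j(2) by linarith
  define k where "k = (i + (2 * j + 1)) mod length vs"
  have "(k + 1) mod length vs = (i + (2 * j + 2)) mod length vs"
    unfolding k_def by (simp add: mod_Suc_eq)
  then have "e = {vs ! k, vs ! ((k + 1) mod length vs)}" "k < length vs"
    using j \<open>0 < length vs\<close> by (simp_all add: nth_rotate k_def)
  then show "e \<in> {{vs ! k, vs ! ((k + 1) mod length vs)} | k. k < length vs}" by blast
qed

lemma odd_cycle_remove_vertex_matching:
  assumes "is_odd_cycle M C" "x \<in> C"
  obtains N where "N \<subseteq> edges_in M C" "perfect_matching_on (C - {x}) N"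
proof -
  obtain vs where vs: "distinct vs" "odd (length vs)" "set vs = C"
    "edges_in M C = {{vs ! k, vs ! ((k + 1) mod length vs)} | k. k < length vs}"
    using assms(1) unfolding is_odd_cycle_def by blast
  obtain i where i: "i < length vs" "x = vs ! i" using assms(2) vs(3) by (metis in_set_conv_nth)
  have "vs \<noteq> []" using i(1) by auto
  then have "rotate i vs ! 0 = x" using i nth_rotate[of 0 vs i] by simp
  then have "perfect_matching_on (C - {x}) (path_pairs (rotate i vs))"
    using perfect_matching_on_path_pairs[of "rotate i vs"] vs by simp
  moreover have "path_pairs (rotate i vs) \<subseteq> edges_in M C"
    using path_pairs_rotate_subset vs(4) by simp
  ultimately show thesis using that by blast
qed

lemma odd_cycle_edge:
  assumes "is_odd_cycle M C"
  obtains a a' where "a \<noteq> a'" "{a, a'} \<in> edges_in M C"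
proof -
  obtain vs where vs: "distinct vs" "3 \<le> length vs"
    "edges_in M C = {{vs ! k, vs ! ((k + 1) mod length vs)} | k. k < length vs}"
    using assms unfolding is_odd_cycle_def by blast
  then have "{vs ! 0, vs ! 1} \<in> edges_in M C" by force
  moreover have "vs ! 0 \<noteq> vs ! 1" using vs(1,2) nth_eq_iff_index_eq[of vs 0 1] by linarith
  ultimately show thesis using that by blast
qed

lemma perfect_matching_join_odd_cycles:
  assumes C1: "is_odd_cycle M C1" and C2: "is_odd_cycle M C2" and disj: "C1 \<inter> C2 = {}"
    and a: "a \<in> C1" and b: "b \<in> C2"
  obtains N where "perfect_matching_on (C1 \<union> C2) N" "N \<subseteq> insert {a, b} {e \<in> M. a \<notin> e \<and> b \<notin> e}"
proof -
  obtain N1 where N1: "N1 \<subseteq> edges_in M C1" "perfect_matching_on (C1 - {a}) N1"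
    by (rule odd_cycle_remove_vertex_matching[OF C1 a])
  obtain N2 where N2: "N2 \<subseteq> edges_in M C2" "perfect_matching_on (C2 - {b}) N2"
    by (rule odd_cycle_remove_vertex_matching[OF C2 b])
  have "perfect_matching_on ({a, b} \<union> ((C1 - {a}) \<union> (C2 - {b}))) ({{a, b}} \<union> (N1 \<union> N2))"
    using disj a b by (intro perfect_matching_on_Un perfect_matching_on_edge N1(2) N2(2)) auto
  moreover have "{a, b} \<union> ((C1 - {a}) \<union> (C2 - {b})) = C1 \<union> C2" using a b by auto
  moreover have "N1 \<union> N2 \<subseteq> {e \<in> M. a \<notin> e \<and> b \<notin> e}"
  proof
    fix e assume e: "e \<in> N1 \<union> N2"
    then have "e \<subseteq> C1 - {a} \<or> e \<subseteq> C2 - {b}"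
      using perfect_matching_onD(1)[OF N1(2)] perfect_matching_onD(1)[OF N2(2)] by blast
    moreover have "e \<in> M" using e N1(1) N2(1) unfolding edges_in_def by blast
    ultimately show "e \<in> {e \<in> M. a \<notin> e \<and> b \<notin> e}" using disj a b by blast
  qed
  ultimately show thesis using that[of "{{a, b}} \<union> (N1 \<union> N2)"] by auto
qed

lemma odd_cycle_card: "is_odd_cycle M C \<Longrightarrow> 3 \<le> card C"
  unfolding is_odd_cycle_def by (auto simp: distinct_card)

section \<open>Replacing components by a perfect matching\<close>

definition rematch :: "'a set set \<Rightarrow> 'a set \<Rightarrow> 'a set set \<Rightarrow> 'a set set" where
  "rematch M S N = {e \<in> M. \<not> e \<subseteq> S} \<union> N"

lemma edges_in_rematch_outside:
  assumes M: "simple_graph V M" and N: "perfect_matching_on S N" and C: "C \<inter> S = {}"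
  shows "edges_in (rematch M S N) C = edges_in M C"
proof -
  have "\<not> e \<subseteq> S" if "e \<in> M" "e \<subseteq> C" for e
    using M that C unfolding simple_graph_def by blast
  moreover have "e \<notin> N" if "e \<subseteq> C" for e
    using that C perfect_matching_onD[OF N, of e] by blast
  ultimately show ?thesis unfolding edges_in_def rematch_def by blast
qed

lemma edges_in_rematch_matching:
  assumes N: "perfect_matching_on S N" and B: "B \<in> N"
  shows "edges_in (rematch M S N) B = {B}"
proof -
  have "e = B" if e: "e \<in> N" "e \<subseteq> B" for e
  proof (rule ccontr)
    assume "e \<noteq> B"
    then have "disjnt e B" using N e(1) B by (auto simp: perfect_matching_on_def pairwise_def)
    then show False using e(2) perfect_matching_onD(2)[OF N e(1)] by (auto simp: disjnt_def)
  qed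
  moreover have "B \<subseteq> S" using perfect_matching_onD(1)[OF N B] .
  ultimately show ?thesis using B unfolding edges_in_def rematch_def by auto
qed

lemma components_rematch:
  assumes M: "simple_graph V M" and "S \<subseteq> V"
    and S: "\<And>C. C \<in> components V M \<Longrightarrow> C \<subseteq> S \<or> C \<inter> S = {}"
    and N: "perfect_matching_on S N"
  shows "components V (rematch M S N) = {C \<in> components V M. C \<inter> S = {}} \<union> N"
proof (rule components_eqI)
  let ?M' = "rematch M S N" and ?P = "{C \<in> components V M. C \<inter> S = {}} \<union> N"
  have US: "\<Union>N = S" using N by (simp add: perfect_matching_on_def)
  show "\<Union>?P = V"
  proof
    have "C \<subseteq> V" if "C \<in> ?P" for C using that US \<open>S \<subseteq> V\<close> components_subset by blast
    then show "\<Union>?P \<subseteq> V" by blast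
    show "V \<subseteq> \<Union>?P"
    proof
      fix v assume "v \<in> V"
      then have "v \<in> \<Union>(components V M)" by (simp add: Union_components)
      then obtain C where "C \<in> components V M" "v \<in> C" by blast
      then show "v \<in> \<Union>?P" using S[of C] US by auto
    qed
  qed
  show "pairwise disjnt ?P"
  proof (rule pairwiseI)
    fix B B' assume B: "B \<in> ?P" "B' \<in> ?P" "B \<noteq> B'"
    have "pairwise disjnt N" using N by (simp add: perfect_matching_on_def)
    moreover have "disjnt C B" "disjnt B C" if "C \<inter> S = {}" "B \<in> N" for B C
      using perfect_matching_onD(1)[OF N that(2)] that(1) by (auto simp: disjnt_def)
    ultimately show "disjnt B B'"
      using B components_disjoint[of B V M B'] by (auto simp: disjnt_def pairwise_def)
  qed
  show "{} \<notin> ?P" using components_nonempty perfect_matching_onD(2)[OF N] by blast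
  show "\<exists>B\<in>?P. e \<subseteq> B" if "e \<in> ?M'" for e
  proof (cases "e \<in> N")
    case False
    then have "e \<in> M" "\<not> e \<subseteq> S" using that by (auto simp: rematch_def)
    obtain C where "C \<in> components V M" "e \<subseteq> C" by (rule edge_in_component[OF M \<open>e \<in> M\<close>])
    then show ?thesis using S \<open>\<not> e \<subseteq> S\<close> by blast
  qed (rule bexI[of _ e], simp_all)
  show "(x, y) \<in> (adj ?M')\<^sup>*" if "B \<in> ?P" "x \<in> B" "y \<in> B" for B x y
  proof (cases "B \<in> N")
    case True
    then obtain u w where "B = {u, w}" using N by (auto simp: perfect_matching_on_def)
    then have "(u, w) \<in> adj ?M'" "(w, u) \<in> adj ?M'"
      using True by (auto simp: adj_def rematch_def insert_commute)
    then show ?thesis using \<open>B = {u, w}\<close> that(2,3) by auto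
  next
    case False
    then have B: "B \<in> components V M" "B \<inter> S = {}" using that(1) by auto
    have "(x, y) \<in> (adj (edges_in M B))\<^sup>*" using component_connected M B(1) that(2,3) .
    moreover have "adj (edges_in M B) \<subseteq> adj ?M'"
      using edges_in_rematch_outside[OF M N B(2)] by (intro adj_mono) (auto simp: edges_in_def)
    ultimately show ?thesis using rtrancl_mono by blast
  qed
qed

definition odd_cycles :: "'a set \<Rightarrow> 'a set set \<Rightarrow> 'a set set" where
  "odd_cycles V M = {C \<in> components V M. is_odd_cycle M C}"

lemma
  assumes E: "simple_graph V E" and M: "perfect_2_matching V E M" and "S \<subseteq> V"
    and S: "\<And>C. C \<in> components V M \<Longrightarrow> C \<subseteq> S \<or> C \<inter> S = {}"
    and N: "perfect_matching_on S N" and E': "rematch M S N \<subseteq> E'"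
  shows perfect_2_matching_rematch: "perfect_2_matching V E' (rematch M S N)"
    and odd_cycles_rematch: "odd_cycles V (rematch M S N) = {C \<in> odd_cycles V M. C \<inter> S = {}}"
proof -
  let ?M' = "rematch M S N"
  have M_simple: "simple_graph V M" using E M by (rule perfect_2_matching_simple_graph)
  note comps = components_rematch[OF M_simple \<open>S \<subseteq> V\<close> S N]
  have old: "(is_K2 ?M' C \<longleftrightarrow> is_K2 M C) \<and> (is_odd_cycle ?M' C \<longleftrightarrow> is_odd_cycle M C)"
    if "C \<inter> S = {}" for C
    using edges_in_rematch_outside[OF M_simple N that] unfolding is_K2_def is_odd_cycle_def by simp
  have new: "is_K2 ?M' B \<and> \<not> is_odd_cycle ?M' B" if "B \<in> N" for B
  proof -
    obtain u w where "u \<noteq> w" "B = {u, w}" using N \<open>B \<in> N\<close> by (auto simp: perfect_matching_on_def)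
    then show ?thesis
      using edges_in_rematch_matching[OF N that] odd_cycle_card[of ?M' B]
      unfolding is_K2_def by auto
  qed
  show "perfect_2_matching V E' ?M'"
    using M E' comps old new unfolding perfect_2_matching_def by auto
  show "odd_cycles V ?M' = {C \<in> odd_cycles V M. C \<inter> S = {}}"
    using comps old new unfolding odd_cycles_def by auto
qed

section \<open>Merging two odd cycles\<close>

text \<open>The new graph E' need only contain the edges of M avoiding a and b, so that both G itself
  and G with aa', bb' switched to ab, a'b' qualify.\<close>
lemma merge_odd_cycles:
  assumes E: "simple_graph V E" and M: "perfect_2_matching V E M"
    and C1: "C1 \<in> odd_cycles V M" and C2: "C2 \<in> odd_cycles V M" and "C1 \<noteq> C2"
    and a: "a \<in> C1" and b: "b \<in> C2" and ab: "{a, b} \<in> E'"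
    and E': "\<And>e. e \<in> M \<Longrightarrow> a \<notin> e \<Longrightarrow> b \<notin> e \<Longrightarrow> e \<in> E'"
  obtains M' where "perfect_2_matching V E' M'" "card (odd_cycles V M') < card (odd_cycles V M)"
proof -
  let ?S = "C1 \<union> C2"
  have comps: "C1 \<in> components V M" "C2 \<in> components V M"
    and cycles: "is_odd_cycle M C1" "is_odd_cycle M C2"
    using C1 C2 by (auto simp: odd_cycles_def)
  have disj: "C1 \<inter> C2 = {}" using components_disjoint comps \<open>C1 \<noteq> C2\<close> by blast
  obtain N where N: "perfect_matching_on ?S N" "N \<subseteq> insert {a, b} {e \<in> M. a \<notin> e \<and> b \<notin> e}"
    by (rule perfect_matching_join_odd_cycles[OF cycles disj a b])
  have "?S \<subseteq> V" using comps components_subset by blast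
  have S: "C \<subseteq> ?S \<or> C \<inter> ?S = {}" if "C \<in> components V M" for C
    using components_disjoint[OF that comps(1)] components_disjoint[OF that comps(2)] by blast
  have "rematch M ?S N \<subseteq> E'"
  proof
    fix e assume "e \<in> rematch M ?S N"
    then consider "e \<in> M" "\<not> e \<subseteq> ?S" | "e \<in> N" unfolding rematch_def by blast
    then show "e \<in> E'"
    proof cases
      case 1
      obtain C where "C \<in> components V M" "e \<subseteq> C"
        by (rule edge_in_component[OF perfect_2_matching_simple_graph[OF E M] 1(1)])
      with S 1(2) have "e \<inter> ?S = {}" by blast
      with 1(1) a b E' show ?thesis by blast
    next
      case 2
      with N(2) ab E' show ?thesis by blast
    qed
  qed
  note rematch = perfect_2_matching_rematch[OF E M \<open>?S \<subseteq> V\<close> S N(1) this]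
    odd_cycles_rematch[OF E M \<open>?S \<subseteq> V\<close> S N(1) this]
  have "C1 \<noteq> {}" using components_nonempty comps(1) by blast
  then have "odd_cycles V (rematch M ?S N) \<subset> odd_cycles V M"
    using rematch(2) C1 by blast
  moreover have "finite (odd_cycles V M)"
    using E finite_components[of V M] unfolding simple_graph_def odd_cycles_def by simp
  ultimately have "card (odd_cycles V (rematch M ?S N)) < card (odd_cycles V M)"
    by (rule psubset_card_mono[rotated])
  with rematch(1) show thesis by (rule that)
qed

lemma degree_switch:
  assumes "finite E" "{a, a'} \<in> E" "{b, b'} \<in> E" "{a, b} \<notin> E" "{a', b'} \<notin> E"
    and "distinct [a, a', b, b']"
  shows "degree (insert {a, b} (insert {a', b'} (E - {{a, a'}, {b, b'}}))) v = degree E v"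
proof -
  let ?E' = "insert {a, b} (insert {a', b'} (E - {{a, a'}, {b, b'}}))"
  let ?D = "\<lambda>F. {e \<in> F. v \<in> e}"
  have swap: "card (?D ?E') = card (?D E)"
    if "?D ?E' = insert X (?D E - {A})" "A \<in> ?D E" "X \<notin> ?D E" for X A
  proof -
    have "card (insert X (?D E - {A})) = Suc (card (?D E - {A}))"
      using that(3) assms(1) by (intro card_insert_disjoint) auto
    also have "\<dots> = card (?D E)" using that(2) assms(1) by (intro card_Suc_Diff1) auto
    finally show ?thesis unfolding that(1) .
  qed
  consider "v = a" | "v = a'" | "v = b" | "v = b'" | "v \<notin> {a, a', b, b'}" by blast
  then have "card (?D ?E') = card (?D E)"
  proof cases
    case 1
    then show ?thesis using assms by (intro swap[of "{a, b}" "{a, a'}"]) (auto 0 3)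
  next
    case 2
    then show ?thesis using assms by (intro swap[of "{a', b'}" "{a, a'}"]) (auto 0 3)
  next
    case 3
    then show ?thesis using assms by (intro swap[of "{a, b}" "{b, b'}"]) (auto 0 3)
  next
    case 4
    then show ?thesis using assms by (intro swap[of "{a', b'}" "{b, b'}"]) (auto 0 3)
  next
    case 5
    then have "?D ?E' = ?D E" by auto
    then show ?thesis by simp
  qed
  then show ?thesis unfolding degree_def .
qed

lemma reduce_odd_cycles:
  assumes E: "simple_graph V E" and M: "perfect_2_matching V E M"
    and C1: "C1 \<in> odd_cycles V M" and C2: "C2 \<in> odd_cycles V M" and "C1 \<noteq> C2"
  obtains E' M' where "simple_graph V E'" "\<forall>v\<in>V. degree E' v = degree E v"
    "perfect_2_matching V E' M'" "card (odd_cycles V M') < card (odd_cycles V M)"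
proof -
  have "is_odd_cycle M C1" "is_odd_cycle M C2" using C1 C2 by (simp_all add: odd_cycles_def)
  obtain a a' where "a \<noteq> a'" and aa': "{a, a'} \<in> edges_in M C1"
    by (rule odd_cycle_edge[OF \<open>is_odd_cycle M C1\<close>])
  obtain b b' where "b \<noteq> b'" and bb': "{b, b'} \<in> edges_in M C2"
    by (rule odd_cycle_edge[OF \<open>is_odd_cycle M C2\<close>])
  have "M \<subseteq> E" using M by (simp add: perfect_2_matching_def)
  have "C1 \<inter> C2 = {}"
    using components_disjoint[of C1 V M C2] C1 C2 \<open>C1 \<noteq> C2\<close> by (simp add: odd_cycles_def)
  then have "distinct [a, a', b, b']" using \<open>a \<noteq> a'\<close> \<open>b \<noteq> b'\<close> aa' bb' by (auto simp: edges_in_def)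
  have "a \<in> C1" "a' \<in> C1" "b \<in> C2" "b' \<in> C2" using aa' bb' by (auto simp: edges_in_def)
  consider "{a, b} \<in> E" | "{a', b'} \<in> E" | "{a, b} \<notin> E" "{a', b'} \<notin> E" by blast
  then show thesis
  proof cases
    case 1
    obtain M' where "perfect_2_matching V E M'" "card (odd_cycles V M') < card (odd_cycles V M)"
      by (rule merge_odd_cycles[OF E M C1 C2 \<open>C1 \<noteq> C2\<close> \<open>a \<in> C1\<close> \<open>b \<in> C2\<close> 1])
        (use \<open>M \<subseteq> E\<close> in blast)
    with E show thesis using that by blast
  next
    case 2
    obtain M' where "perfect_2_matching V E M'" "card (odd_cycles V M') < card (odd_cycles V M)"
      by (rule merge_odd_cycles[OF E M C1 C2 \<open>C1 \<noteq> C2\<close> \<open>a' \<in> C1\<close> \<open>b' \<in> C2\<close> 2])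
        (use \<open>M \<subseteq> E\<close> in blast)
    with E show thesis using that by blast
  next
    case 3
    define E' where "E' = insert {a, b} (insert {a', b'} (E - {{a, a'}, {b, b'}}))"
    have old: "{a, a'} \<in> E" "{b, b'} \<in> E" using aa' bb' \<open>M \<subseteq> E\<close> by (auto simp: edges_in_def)
    have "degree E' v = degree E v" for v
      unfolding E'_def by (rule degree_switch[OF finite_edges[OF E] old 3 \<open>distinct [a, a', b, b']\<close>])
    moreover have "simple_graph V E'"
    proof -
      have "a \<in> V" "a' \<in> V" "b \<in> V" "b' \<in> V"
        using simple_graph_edgeD[OF E old(1)] simple_graph_edgeD[OF E old(2)] by simp_all
      with \<open>distinct [a, a', b, b']\<close> show ?thesis unfolding E'_def
        by (intro simple_graph_insert simple_graph_subset[OF E]) auto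
    qed
    moreover obtain M' where "perfect_2_matching V E' M'" "card (odd_cycles V M') < card (odd_cycles V M)"
      by (rule merge_odd_cycles[OF E M C1 C2 \<open>C1 \<noteq> C2\<close> \<open>a \<in> C1\<close> \<open>b \<in> C2\<close>, of E'])
        (use \<open>M \<subseteq> E\<close> in \<open>auto simp: E'_def\<close>)
    ultimately show thesis using that by blast
  qed
qed

lemma degree_preserving_at_most_one_odd_cycle:
  assumes "simple_graph V E" "perfect_2_matching V E M"
  shows "\<exists>E'. simple_graph V E' \<and> (\<forall>v\<in>V. degree E' v = degree E v) \<and>
           (\<exists>M. perfect_2_matching V E' M \<and> card (odd_cycles V M) \<le> 1)"
  using assms
proof (induction "card (odd_cycles V M)" arbitrary: E M rule: less_induct)
  case less
  show ?case
  proof (cases "card (odd_cycles V M) \<le> 1")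
    case True
    with less.prems show ?thesis by blast
  next
    case False
    then have "finite (odd_cycles V M)" by (intro card_ge_0_finite) simp
    with False obtain C1 C2 where C: "C1 \<in> odd_cycles V M" "C2 \<in> odd_cycles V M" "C1 \<noteq> C2"
      by (auto simp: card_le_Suc0_iff_eq)
    obtain E1 M1 where E1: "simple_graph V E1" "\<forall>v\<in>V. degree E1 v = degree E v"
      "perfect_2_matching V E1 M1" "card (odd_cycles V M1) < card (odd_cycles V M)"
      by (rule reduce_odd_cycles[OF less.prems C])
    from less.hyps[OF E1(4) E1(1,3)] E1(2) show ?thesis by auto
  qed
qed

theorem lemma18:
  fixes V :: "'a set" and E :: "'a set set"
  assumes "simple_graph V E"
    and "\<exists>M. perfect_2_matching V E M"
  shows "\<exists>E'. simple_graph V E' \<and> (\<forall>v\<in>V. degree E' v = degree E v) \<and>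
           (\<exists>M. perfect_2_matching V E' M \<and>
                card {C \<in> components V M. is_odd_cycle M C} \<le> 1)"
  using degree_preserving_at_most_one_odd_cycle assms unfolding odd_cycles_def by blast

end
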